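(* Let $G_1,G_2$ be two connected graphs that are cospectral with respect to the Laplacian matrix. If $Z(G_1)\neq Z(G_2)$, then for every $r\geq 1$ the joins $G_1\vee K_r$ and $G_2\vee K_r$ are cospectral with respect to the Laplacian matrix and satisfy $Z(G_1\vee K_r)\neq Z(G_2\vee K_r)$. Likewise, if $Z_{-}(G_1)\neq Z_{-}(G_2)$, then for every $r\geq 1$ the joins $G_1\vee K_r$ and $G_2\vee K_r$ are Laplacian-cospectral and satisfy $Z_{-}(G_1\vee K_r)\neq Z_{-}(G_2\vee K_r)$.
   Context: Graphs are finite, simple, undirected. The Laplacian matrix of $G$ is $L=D-A$, with $D$ the diagonal degree matrix and $A$ the adjacency matrix; graphs are Laplacian-cospectral if their Laplacian matrices have the same multiset of eigenvalues. The join $G\vee H$ is the disjoint union of $G$ and $H$ together with all edges $\{u,v\}$, $u\in V(G)$, $v\in V(H)$. $K_r$ is the complete graph on $r$ vertices. The zero forcing number $Z(G)$ is the minimum size of a set $S\subseteq V(G)$ such that, if the vertices of $S$ are colored blue and all others white, repeated application of the rule "a blue vertex with exactly one white neighbor forces that neighbor to become blue" eventually makes every vertex blue. The skew zero forcing number $Z_{-}(G)$ is defined in the same way but with the rule "any vertex (blue or white) that has exactly one white neighbor forces that neighbor to become blue". *)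

theory Defs
  imports "Jordan_Normal_Form.Determinant" "Jordan_Normal_Form.Char_Poly"
          "HOL-Computational_Algebra.Computational_Algebra"
begin

definition simple_graph :: "nat \<Rightarrow> (nat \<Rightarrow> nat \<Rightarrow> bool) \<Rightarrow> bool" where
  "simple_graph n E \<longleftrightarrow> (\<forall>u v. E u v \<longrightarrow> u < n \<and> v < n) \<and>
     (\<forall>u v. E u v \<longrightarrow> E v u) \<and> (\<forall>u. \<not> E u u)"

definition connected_graph :: "nat \<Rightarrow> (nat \<Rightarrow> nat \<Rightarrow> bool) \<Rightarrow> bool" where
  "connected_graph n E \<longleftrightarrow> n > 0 \<and> (\<forall>u v. u < n \<longrightarrow> v < n \<longrightarrow> E\<^sup>*\<^sup>* u v)"

definition nbrs :: "nat \<Rightarrow> (nat \<Rightarrow> nat \<Rightarrow> bool) \<Rightarrow> nat \<Rightarrow> nat set" where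
  "nbrs n E u = {w. w < n \<and> E u w}"

definition laplacian :: "nat \<Rightarrow> (nat \<Rightarrow> nat \<Rightarrow> bool) \<Rightarrow> real mat" where
  "laplacian n E = mat n n (\<lambda>(i, j).
      (if i = j then real (card (nbrs n E i)) else 0) - (if E i j then 1 else 0))"

definition eigenvalues_mset :: "real mat \<Rightarrow> complex multiset" where
  "eigenvalues_mset A = proots (map_poly complex_of_real (char_poly A))"

definition laplacian_cospectral ::
  "nat \<Rightarrow> (nat \<Rightarrow> nat \<Rightarrow> bool) \<Rightarrow> nat \<Rightarrow> (nat \<Rightarrow> nat \<Rightarrow> bool) \<Rightarrow> bool" where
  "laplacian_cospectral n1 E1 n2 E2 \<longleftrightarrow>
     eigenvalues_mset (laplacian n1 E1) = eigenvalues_mset (laplacian n2 E2)"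

definition complete_graph_adj :: "nat \<Rightarrow> nat \<Rightarrow> nat \<Rightarrow> bool" where
  "complete_graph_adj r u v \<longleftrightarrow> u < r \<and> v < r \<and> u \<noteq> v"

text \<open>Join of (n1,E1) and (n2,E2): vertex set {0..<n1+n2}, second graph shifted by n1.
  The vertex count of the join is n1 + n2.\<close>
definition join_adj ::
  "nat \<Rightarrow> (nat \<Rightarrow> nat \<Rightarrow> bool) \<Rightarrow> nat \<Rightarrow> (nat \<Rightarrow> nat \<Rightarrow> bool) \<Rightarrow> nat \<Rightarrow> nat \<Rightarrow> bool" where
  "join_adj n1 E1 n2 E2 u v \<longleftrightarrow>
     (u < n1 \<and> v < n1 \<and> E1 u v) \<or>
     (n1 \<le> u \<and> n1 \<le> v \<and> u < n1 + n2 \<and> v < n1 + n2 \<and> E2 (u - n1) (v - n1)) \<or>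
     (u < n1 \<and> n1 \<le> v \<and> v < n1 + n2) \<or>
     (v < n1 \<and> n1 \<le> u \<and> u < n1 + n2)"

inductive_set zf_closure :: "nat \<Rightarrow> (nat \<Rightarrow> nat \<Rightarrow> bool) \<Rightarrow> nat set \<Rightarrow> nat set"
  for n E S where
  init: "v \<in> S \<Longrightarrow> v < n \<Longrightarrow> v \<in> zf_closure n E S"
| force: "u \<in> zf_closure n E S \<Longrightarrow> w \<in> nbrs n E u \<Longrightarrow>
          (\<forall>x \<in> nbrs n E u. x \<noteq> w \<longrightarrow> x \<in> zf_closure n E S) \<Longrightarrow> w \<in> zf_closure n E S"

inductive_set szf_closure :: "nat \<Rightarrow> (nat \<Rightarrow> nat \<Rightarrow> bool) \<Rightarrow> nat set \<Rightarrow> nat set"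
  for n E S where
  init: "v \<in> S \<Longrightarrow> v < n \<Longrightarrow> v \<in> szf_closure n E S"
| force: "u < n \<Longrightarrow> w \<in> nbrs n E u \<Longrightarrow>
          (\<forall>x \<in> nbrs n E u. x \<noteq> w \<longrightarrow> x \<in> szf_closure n E S) \<Longrightarrow> w \<in> szf_closure n E S"

definition zero_forcing_number :: "nat \<Rightarrow> (nat \<Rightarrow> nat \<Rightarrow> bool) \<Rightarrow> nat" where
  "zero_forcing_number n E =
     (LEAST k. \<exists>S. S \<subseteq> {..<n} \<and> card S = k \<and> zf_closure n E S = {..<n})"

definition skew_zero_forcing_number :: "nat \<Rightarrow> (nat \<Rightarrow> nat \<Rightarrow> bool) \<Rightarrow> nat" where
  "skew_zero_forcing_number n E =
     (LEAST k. \<exists>S. S \<subseteq> {..<n} \<and> card S = k \<and> szf_closure n E S = {..<n})"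

end

theory Submission
  imports Defs
begin

text \<open>
  Spectrum: in block form, \<open>tI - L(G \<or> K\<^sub>r)\<close> has upper left block \<open>(t - r)I - L(G)\<close>, whose
  rows all sum to \<open>t - r\<close>, and all-ones off-diagonal blocks. A unipotent column operation
  therefore makes it block triangular, and for \<open>t \<noteq> r\<close> the characteristic polynomial of the
  join is \<open>\<chi>\<^sub>G(t - r)\<close> times a factor depending only on \<open>n\<close>, \<open>r\<close> and \<open>t\<close>.

  Forcing: if \<open>G\<close> has no isolated vertex, then \<open>Z(G \<or> K\<^sub>r) = Z(G) + r\<close>, and likewise for
  \<open>Z\<^sub>-\<close>. A forcing set of \<open>G\<close> together with the clique forces the join. Conversely,
  look at the first force \<open>u \<rightarrow> w\<close> from a forcing set \<open>S\<close> of the join. If \<open>u\<close> lies in the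
  clique it sees every vertex, so at most two vertices (one, if \<open>u\<close> must be blue) are white.
  Otherwise \<open>u\<close> sees the whole clique, so at most one clique vertex is white, and then
  \<open>S \<inter> V(G)\<close>, minus a neighbour of \<open>u\<close> in the second case, forces \<open>G\<close>.
  Cospectral graphs have the same order; if that order is 1, both graphs are \<open>K\<^sub>1\<close> and the
  hypotheses on the forcing numbers fail.
\<close>

section \<open>Graphs joined with a clique\<close>

lemma simple_graph_one_vertex: "simple_graph 1 E \<Longrightarrow> E = (\<lambda>_ _. False)"
  unfolding simple_graph_def by (metis less_one)

lemma connected_graph_nbrs_nonempty:
  assumes "simple_graph n E" and "connected_graph n E" and "2 \<le> n" and "v < n"
  shows "nbrs n E v \<noteq> {}"
proof -
  define w where "w = (if v = 0 then 1 else 0 :: nat)"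
  have "w < n" "w \<noteq> v" using assms(3,4) unfolding w_def by auto
  then have "E\<^sup>*\<^sup>* v w" using assms(2,4) unfolding connected_graph_def by blast
  then obtain x where "E v x" using \<open>w \<noteq> v\<close> by (cases rule: converse_rtranclpE) auto
  then show ?thesis using assms(1) unfolding simple_graph_def nbrs_def by blast
qed

lemma nbrs_less: "x \<in> nbrs n E u \<Longrightarrow> x < n"
  unfolding nbrs_def by simp

lemma simple_graph_nbrs_sym:
  "simple_graph n E \<Longrightarrow> w \<in> nbrs n E u \<Longrightarrow> u \<in> nbrs n E w"
  unfolding simple_graph_def nbrs_def by auto

lemma simple_graph_nbrs_irrefl: "simple_graph n E \<Longrightarrow> u \<notin> nbrs n E u"
  unfolding simple_graph_def nbrs_def by auto

abbreviation join_clique :: "nat \<Rightarrow> (nat \<Rightarrow> nat \<Rightarrow> bool) \<Rightarrow> nat \<Rightarrow> nat \<Rightarrow> nat \<Rightarrow> bool" where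
  "join_clique n E r \<equiv> join_adj n E r (complete_graph_adj r)"

lemma join_clique_low:
  assumes "simple_graph n E" "u < n"
  shows "join_clique n E r u v \<longleftrightarrow> (v < n \<and> E u v) \<or> (n \<le> v \<and> v < n + r)"
  using assms unfolding join_adj_def simple_graph_def complete_graph_adj_def by auto

lemma join_clique_high:
  assumes "n \<le> u" "u < n + r"
  shows "join_clique n E r u v \<longleftrightarrow> v < n + r \<and> v \<noteq> u"
  using assms unfolding join_adj_def complete_graph_adj_def by auto

lemma nbrs_join_clique_low:
  assumes "simple_graph n E" "u < n"
  shows "nbrs (n + r) (join_clique n E r) u = nbrs n E u \<union> {n..<n+r}"
  using join_clique_low[OF assms] unfolding nbrs_def by auto

lemma nbrs_join_clique_high:
  assumes "n \<le> u" "u < n + r"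
  shows "nbrs (n + r) (join_clique n E r) u = {..<n+r} - {u}"
  using join_clique_high[OF assms] unfolding nbrs_def by auto

lemma card_nbrs_join_clique_low:
  assumes "simple_graph n E" "u < n"
  shows "card (nbrs (n + r) (join_clique n E r) u) = card (nbrs n E u) + r"
proof -
  have "nbrs n E u \<inter> {n..<n+r} = {}" using nbrs_less by fastforce
  then show ?thesis
    unfolding nbrs_join_clique_low[OF assms] by (simp add: card_Un_disjoint nbrs_def)
qed

lemma card_nbrs_join_clique_high:
  assumes "n \<le> u" "u < n + r"
  shows "card (nbrs (n + r) (join_clique n E r) u) = n + r - 1"
  unfolding nbrs_join_clique_high[OF assms] using assms by simp

section \<open>The Laplacian spectrum of the join\<close>

abbreviation ones_mat :: "nat \<Rightarrow> nat \<Rightarrow> 'a :: one mat" where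
  "ones_mat m n \<equiv> mat m n (\<lambda>_. 1)"

lemma mult_const_mat_row_sums:
  fixes B :: "'a :: comm_semiring_1 mat"
  assumes "B \<in> carrier_mat m n" and "\<And>i. i < m \<Longrightarrow> (\<Sum>j<n. B $$ (i, j)) = s"
  shows "B * mat n k (\<lambda>_. c) = mat m k (\<lambda>_. s * c)"
  using assms by (intro eq_matI) (auto simp: scalar_prod_def atLeast0LessThan sum_distrib_right[symmetric])

lemma det_four_block_mat_ones:
  fixes B D :: "'a :: field mat"
  assumes B: "B \<in> carrier_mat n n" and D: "D \<in> carrier_mat r r"
    and row_sums: "\<And>i. i < n \<Longrightarrow> (\<Sum>j<n. B $$ (i, j)) = s" and "s \<noteq> 0"
  shows "det (four_block_mat B (ones_mat n r) (ones_mat r n) D) =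
    det B * det (D - (of_nat n / s) \<cdot>\<^sub>m ones_mat r r)"
proof -
  define Q where "Q = four_block_mat (1\<^sub>m n) (mat n r (\<lambda>_. - 1 / s)) (0\<^sub>m r n) (1\<^sub>m r)"
  have Q: "Q \<in> carrier_mat (n + r) (n + r)" unfolding Q_def by simp
  have "det Q = 1"
    unfolding Q_def by (subst det_four_block_mat_lower_left_zero) auto
  have B_const: "B * mat n r (\<lambda>_. - 1 / s) = mat n r (\<lambda>_. s * (- 1 / s))"
    using B row_sums by (rule mult_const_mat_row_sums)
  have ones_const: "ones_mat r n * mat n r (\<lambda>_. - 1 / s) = mat r r (\<lambda>_. of_nat n * (- 1 / s))"
    by (rule mult_const_mat_row_sums) auto
  have XQ: "four_block_mat B (ones_mat n r) (ones_mat r n) D * Q =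
    four_block_mat B (0\<^sub>m n r) (ones_mat r n) (D - (of_nat n / s) \<cdot>\<^sub>m ones_mat r r)"
    unfolding Q_def
  proof (subst mult_four_block_mat[OF B _ _ D]; (intro cong_four_block_mat)?)
    show "B * mat n r (\<lambda>_. - 1 / s) + ones_mat n r * 1\<^sub>m r = 0\<^sub>m n r"
      unfolding B_const using \<open>s \<noteq> 0\<close> by (intro eq_matI) auto
    show "ones_mat r n * mat n r (\<lambda>_. - 1 / s) + D * 1\<^sub>m r =
      D - (of_nat n / s) \<cdot>\<^sub>m ones_mat r r"
      unfolding ones_const using D by (intro eq_matI) auto
  qed (use B D in auto)
  have "det (four_block_mat B (ones_mat n r) (ones_mat r n) D) =
    det (four_block_mat B (ones_mat n r) (ones_mat r n) D * Q)"
    using det_mult[OF _ Q, of "four_block_mat B (ones_mat n r) (ones_mat r n) D"] B D \<open>det Q = 1\<close>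
    by simp
  also have "\<dots> = det B * det (D - (of_nat n / s) \<cdot>\<^sub>m ones_mat r r)"
    unfolding XQ using B D by (intro det_four_block_mat_upper_right_zero) auto
  finally show ?thesis .
qed

lemma laplacian_carrier: "laplacian n E \<in> carrier_mat n n"
  unfolding laplacian_def by simp

lemma laplacian_row_sum: "i < n \<Longrightarrow> (\<Sum>j<n. laplacian n E $$ (i, j)) = 0"
proof -
  assume "i < n"
  then have "(\<Sum>j<n. laplacian n E $$ (i, j)) =
      (\<Sum>j<n. if j = i then real (card (nbrs n E i)) else 0) - (\<Sum>j<n. if E i j then 1 else 0)"
    by (simp add: laplacian_def sum_subtractf)
  also have "\<dots> = 0"
    using \<open>i < n\<close> by (simp add: sum.If_cases nbrs_def Int_def lessThan_def)
  finally show ?thesis .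
qed

lemma char_matrix_laplacian_join_clique:
  assumes sg: "simple_graph n E"
  shows "- char_matrix (laplacian (n + r) (join_clique n E r)) t =
    four_block_mat (- char_matrix (laplacian n E) (t - real r)) (ones_mat n r) (ones_mat r n)
      ((t - real (n + r)) \<cdot>\<^sub>m 1\<^sub>m r + ones_mat r r)" (is "?L = ?R")
proof (rule eq_matI)
  fix i j
  assume "i < dim_row ?R" and "j < dim_col ?R"
  then have "i < n + r" "j < n + r" by (simp_all add: char_matrix_def laplacian_def)
  then show "?L $$ (i, j) = ?R $$ (i, j)"
    by (cases "i < n"; cases "j < n")
      (auto simp: char_matrix_def laplacian_def join_clique_low[OF sg] join_clique_high
        card_nbrs_join_clique_low[OF sg] card_nbrs_join_clique_high)
qed (simp_all add: char_matrix_def laplacian_def)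

lemma poly_char_poly_laplacian_join_clique:
  assumes sg: "simple_graph n E" and "t \<noteq> real r"
  shows "poly (char_poly (laplacian (n + r) (join_clique n E r))) t =
    poly (char_poly (laplacian n E)) (t - real r) *
    det ((t - real (n + r)) \<cdot>\<^sub>m 1\<^sub>m r + ones_mat r r - (real n / (t - real r)) \<cdot>\<^sub>m ones_mat r r)"
proof -
  let ?B = "- char_matrix (laplacian n E) (t - real r)"
  have row_sums: "(\<Sum>j<n. ?B $$ (i, j)) = t - real r" if "i < n" for i
  proof -
    have "(\<Sum>j<n. ?B $$ (i, j)) =
        (\<Sum>j<n. (if i = j then t - real r else 0) - laplacian n E $$ (i, j))"
      using that laplacian_carrier[of n E] by (intro sum.cong) (auto simp: char_matrix_def)
    then show ?thesis using that laplacian_row_sum[OF that] by (simp add: sum_subtractf)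
  qed
  have "poly (char_poly (laplacian (n + r) (join_clique n E r))) t =
      det (- char_matrix (laplacian (n + r) (join_clique n E r)) t)"
    by (rule char_poly_matrix[OF laplacian_carrier])
  also have "\<dots> = det ?B *
      det ((t - real (n + r)) \<cdot>\<^sub>m 1\<^sub>m r + ones_mat r r - (real n / (t - real r)) \<cdot>\<^sub>m ones_mat r r)"
    unfolding char_matrix_laplacian_join_clique[OF sg]
    using row_sums \<open>t \<noteq> real r\<close> laplacian_carrier[of n E]
    by (intro det_four_block_mat_ones) auto
  also have "det ?B = poly (char_poly (laplacian n E)) (t - real r)"
    by (rule char_poly_matrix[OF laplacian_carrier, symmetric])
  finally show ?thesis .
qed

lemma monic_complex_poly_eqI:
  fixes p q :: "complex poly"
  assumes "lead_coeff p = 1" "lead_coeff q = 1" "proots p = proots q"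
  shows "p = q"
  using complex_poly_decompose_multiset[of p] complex_poly_decompose_multiset[of q] assms by simp

lemma laplacian_cospectral_iff_char_poly:
  "laplacian_cospectral n1 E1 n2 E2 \<longleftrightarrow> char_poly (laplacian n1 E1) = char_poly (laplacian n2 E2)"
proof
  let ?p1 = "char_poly (laplacian n1 E1)" and ?p2 = "char_poly (laplacian n2 E2)"
  assume "laplacian_cospectral n1 E1 n2 E2"
  moreover have "lead_coeff (map_poly complex_of_real ?p1) = 1"
    using degree_monic_char_poly[OF laplacian_carrier] by (simp add: degree_map_poly coeff_map_poly)
  moreover have "lead_coeff (map_poly complex_of_real ?p2) = 1"
    using degree_monic_char_poly[OF laplacian_carrier] by (simp add: degree_map_poly coeff_map_poly)
  ultimately have "map_poly complex_of_real ?p1 = map_poly complex_of_real ?p2"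
    unfolding laplacian_cospectral_def eigenvalues_mset_def by (intro monic_complex_poly_eqI)
  then show "?p1 = ?p2" by (metis coeff_map_poly of_real_0 of_real_eq_iff poly_eqI)
qed (simp add: laplacian_cospectral_def eigenvalues_mset_def)

lemma laplacian_cospectral_card_eq: "laplacian_cospectral n1 E1 n2 E2 \<Longrightarrow> n1 = n2"
  unfolding laplacian_cospectral_iff_char_poly
  by (metis degree_monic_char_poly laplacian_carrier)

lemma poly_eqI_off_point:
  fixes p q :: "'a :: {idom, ring_char_0} poly"
  assumes "\<And>t. t \<noteq> a \<Longrightarrow> poly p t = poly q t"
  shows "p = q"
proof (rule ccontr)
  assume "p \<noteq> q"
  then have "finite {t. poly (p - q) t = 0}" by (intro poly_roots_finite) simp
  moreover have "UNIV - {a} \<subseteq> {t. poly (p - q) t = 0}" using assms by auto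
  ultimately have "finite (UNIV - {a} :: 'a set)" by (rule finite_subset[rotated])
  then show False using infinite_UNIV_char_0[where 'a = 'a] by simp
qed

lemma laplacian_cospectral_join_clique:
  assumes "simple_graph n1 E1" "simple_graph n2 E2" "laplacian_cospectral n1 E1 n2 E2"
  shows "laplacian_cospectral (n1 + r) (join_clique n1 E1 r) (n2 + r) (join_clique n2 E2 r)"
  unfolding laplacian_cospectral_iff_char_poly
proof (rule poly_eqI_off_point[where a = "real r"])
  fix t :: real
  assume "t \<noteq> real r"
  have "n1 = n2" using assms(3) by (rule laplacian_cospectral_card_eq)
  with assms(3) show "poly (char_poly (laplacian (n1 + r) (join_clique n1 E1 r))) t =
      poly (char_poly (laplacian (n2 + r) (join_clique n2 E2 r))) t"
    unfolding laplacian_cospectral_iff_char_poly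
    using poly_char_poly_laplacian_join_clique[OF assms(1) \<open>t \<noteq> real r\<close>]
      poly_char_poly_laplacian_join_clique[OF assms(2) \<open>t \<noteq> real r\<close>]
    by simp
qed

section \<open>Zero forcing and skew zero forcing\<close>

inductive_set forcing_closure ::
  "bool \<Rightarrow> nat \<Rightarrow> (nat \<Rightarrow> nat \<Rightarrow> bool) \<Rightarrow> nat set \<Rightarrow> nat set"
  for skew n E S where
  init: "v \<in> S \<Longrightarrow> v < n \<Longrightarrow> v \<in> forcing_closure skew n E S"
| force: "u < n \<Longrightarrow> skew \<or> u \<in> forcing_closure skew n E S \<Longrightarrow> w \<in> nbrs n E u \<Longrightarrow>
          (\<forall>x \<in> nbrs n E u. x \<noteq> w \<longrightarrow> x \<in> forcing_closure skew n E S) \<Longrightarrow>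
          w \<in> forcing_closure skew n E S"

definition forcing_number :: "bool \<Rightarrow> nat \<Rightarrow> (nat \<Rightarrow> nat \<Rightarrow> bool) \<Rightarrow> nat" where
  "forcing_number skew n E =
     (LEAST k. \<exists>S. S \<subseteq> {..<n} \<and> card S = k \<and> forcing_closure skew n E S = {..<n})"

lemma forcing_closure_less: "x \<in> forcing_closure skew n E S \<Longrightarrow> x < n"
  by (cases rule: forcing_closure.cases) (blast dest: nbrs_less)+

lemma zf_closure_eq_forcing_closure: "zf_closure n E S = forcing_closure False n E S"
proof
  show "zf_closure n E S \<subseteq> forcing_closure False n E S"
  proof
    fix x assume "x \<in> zf_closure n E S"
    then show "x \<in> forcing_closure False n E S"
    proof induction
      case (force u w)
      have "u < n" using force.IH(1) by (rule forcing_closure_less)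
      with force show ?case by (intro forcing_closure.force[of u]) auto
    qed (rule forcing_closure.init)
  qed
  show "forcing_closure False n E S \<subseteq> zf_closure n E S"
  proof
    fix x assume "x \<in> forcing_closure False n E S"
    then show "x \<in> zf_closure n E S" by induction (auto intro: zf_closure.intros)
  qed
qed

lemma szf_closure_eq_forcing_closure: "szf_closure n E S = forcing_closure True n E S"
proof
  show "szf_closure n E S \<subseteq> forcing_closure True n E S"
  proof
    fix x assume "x \<in> szf_closure n E S"
    then show "x \<in> forcing_closure True n E S" by induction (auto intro: forcing_closure.intros)
  qed
  show "forcing_closure True n E S \<subseteq> szf_closure n E S"
  proof
    fix x assume "x \<in> forcing_closure True n E S"
    then show "x \<in> szf_closure n E S" by induction (auto intro: szf_closure.intros)
  qed
qed

lemma zero_forcing_number_eq_forcing_number: "zero_forcing_number n E = forcing_number False n E"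
  unfolding zero_forcing_number_def forcing_number_def zf_closure_eq_forcing_closure ..

lemma skew_zero_forcing_number_eq_forcing_number:
  "skew_zero_forcing_number n E = forcing_number True n E"
  unfolding skew_zero_forcing_number_def forcing_number_def szf_closure_eq_forcing_closure ..

lemma forcing_closure_lessThan: "forcing_closure skew n E {..<n} = {..<n}"
  by (auto intro: forcing_closure.init dest: forcing_closure_less)

lemma forcing_number_le:
  "S \<subseteq> {..<n} \<Longrightarrow> forcing_closure skew n E S = {..<n} \<Longrightarrow> forcing_number skew n E \<le> card S"
  unfolding forcing_number_def by (rule Least_le) blast

lemma forcing_number_attained:
  "\<exists>S. S \<subseteq> {..<n} \<and> card S = forcing_number skew n E \<and> forcing_closure skew n E S = {..<n}"
proof -
  have "\<exists>k S. S \<subseteq> {..<n} \<and> card S = k \<and> forcing_closure skew n E S = {..<n}"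
    using forcing_closure_lessThan by blast
  then show ?thesis unfolding forcing_number_def by (rule LeastI_ex)
qed

lemma forcing_closure_mono:
  assumes "S \<subseteq> S'"
  shows "forcing_closure skew n E S \<subseteq> forcing_closure skew n E S'"
proof
  fix x assume "x \<in> forcing_closure skew n E S"
  then show "x \<in> forcing_closure skew n E S'"
    by induction (use assms in \<open>auto intro: forcing_closure.intros\<close>)
qed

lemma forcing_closure_subset_closure:
  assumes "S' \<subseteq> forcing_closure skew n E S"
  shows "forcing_closure skew n E S' \<subseteq> forcing_closure skew n E S"
proof
  fix x assume "x \<in> forcing_closure skew n E S'"
  then show "x \<in> forcing_closure skew n E S"
    by induction (use assms in \<open>auto intro: forcing_closure.intros\<close>)
qed

lemma forcing_closure_insert_forced:
  assumes "T \<subseteq> {..<n}" and "u < n" and "skew \<or> u \<in> T"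
    and "w \<in> nbrs n E u" and "nbrs n E u - {w} \<subseteq> T"
  shows "forcing_closure skew n E (insert w T) = forcing_closure skew n E T"
proof
  have "w \<in> forcing_closure skew n E T"
    using assms by (intro forcing_closure.force[of u]) (auto intro: forcing_closure.init)
  then have "insert w T \<subseteq> forcing_closure skew n E T"
    using assms(1) by (auto intro: forcing_closure.init)
  then show "forcing_closure skew n E (insert w T) \<subseteq> forcing_closure skew n E T"
    by (rule forcing_closure_subset_closure)
  show "forcing_closure skew n E T \<subseteq> forcing_closure skew n E (insert w T)"
    by (rule forcing_closure_mono) blast
qed

lemma forcing_closure_delete_forced:
  assumes "forcing_closure skew n E T = {..<n}" and "T \<subseteq> {..<n}"
    and "u < n" and "skew \<or> u \<in> T - {x}" and "x \<in> nbrs n E u" and "nbrs n E u \<subseteq> T"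
  shows "forcing_closure skew n E (T - {x}) = {..<n}"
proof -
  have "forcing_closure skew n E (insert x (T - {x})) = forcing_closure skew n E (T - {x})"
    using assms(2-6) by (intro forcing_closure_insert_forced[of _ _ u]) auto
  moreover have "insert x (T - {x}) = T" using assms(5,6) by blast
  ultimately show ?thesis using assms(1) by simp
qed

lemma forcing_closure_all_but_one:
  assumes "simple_graph n E" and "w \<in> nbrs n E u"
  shows "forcing_closure skew n E ({..<n} - {w}) = {..<n}"
proof -
  have "u \<in> nbrs n E w" "u \<noteq> w"
    using simple_graph_nbrs_sym[OF assms] simple_graph_nbrs_irrefl[OF assms(1), of u] assms(2) by auto
  then have "forcing_closure skew n E (insert w ({..<n} - {w})) = forcing_closure skew n E ({..<n} - {w})"
    using assms(2) by (intro forcing_closure_insert_forced[of _ _ u]) (auto simp: nbrs_def)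
  moreover have "insert w ({..<n} - {w}) = {..<n}" using assms(2) by (auto simp: nbrs_def)
  ultimately show ?thesis using forcing_closure_lessThan by metis
qed

lemma skew_forcing_closure_all_but_edge:
  assumes "simple_graph n E" and "w \<in> nbrs n E u"
  shows "forcing_closure True n E ({..<n} - {u, w}) = {..<n}"
proof -
  have u: "u \<in> nbrs n E w" "u \<noteq> w"
    using simple_graph_nbrs_sym[OF assms] simple_graph_nbrs_irrefl[OF assms(1), of u] assms(2) by auto
  have irr: "u \<notin> nbrs n E u" "w \<notin> nbrs n E w" using assms(1) simple_graph_nbrs_irrefl by auto
  let ?T = "{..<n} - {u, w}"
  have "forcing_closure True n E (insert w ?T) = forcing_closure True n E ?T"
    using assms(2) u irr by (intro forcing_closure_insert_forced[of _ _ u]) (auto simp: nbrs_def)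
  moreover have "forcing_closure True n E (insert u (insert w ?T)) = forcing_closure True n E (insert w ?T)"
    using assms(2) u irr by (intro forcing_closure_insert_forced[of _ _ w]) (auto simp: nbrs_def)
  moreover have "insert u (insert w ?T) = {..<n}" using assms(2) u by (auto simp: nbrs_def)
  ultimately show ?thesis using forcing_closure_lessThan by metis
qed

lemma exists_forcing_set_card_le:
  assumes "simple_graph n E" and "0 < n" and "\<forall>v<n. nbrs n E v \<noteq> {}"
  shows "\<exists>T \<subseteq> {..<n}. forcing_closure skew n E T = {..<n} \<and>
    card T + (if skew then 2 else 1) \<le> n"
proof -
  obtain x where x: "x \<in> nbrs n E 0" using assms(2,3) by blast
  have "x \<noteq> 0" using x simple_graph_nbrs_irrefl[OF assms(1), of 0] by metis
  have "x < n" using x by (rule nbrs_less)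
  show ?thesis
  proof (cases skew)
    case True
    have "card ({..<n} - {0, x}) = n - 2" using \<open>x \<noteq> 0\<close> \<open>x < n\<close> assms(2) by simp
    with True show ?thesis
      using skew_forcing_closure_all_but_edge[OF assms(1) x] \<open>x \<noteq> 0\<close> \<open>x < n\<close>
      by (intro exI[of _ "{..<n} - {0, x}"]) auto
  next
    case False
    have "card ({..<n} - {x}) = n - 1" using \<open>x < n\<close> by simp
    with False show ?thesis
      using forcing_closure_all_but_one[OF assms(1) x] \<open>x < n\<close>
      by (intro exI[of _ "{..<n} - {x}"]) auto
  qed
qed

lemma forcing_closure_first_force:
  assumes "x \<in> forcing_closure skew n E S" and "x \<notin> S"
  shows "\<exists>u w. u < n \<and> (skew \<or> u \<in> S) \<and> w \<in> nbrs n E u - S \<and> nbrs n E u - {w} \<subseteq> S"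
  using assms
proof induction
  case (init v)
  then show ?case by simp
next
  case (force u w)
  show ?case
  proof (cases "(skew \<or> u \<in> S) \<and> nbrs n E u - {w} \<subseteq> S")
    case True
    with force.hyps force.prems show ?thesis by blast
  next
    case False
    with force.IH show ?thesis by blast
  qed
qed

lemma forcing_closure_join_clique_extend:
  assumes "simple_graph n E" and "forcing_closure skew n E T = {..<n}"
  shows "forcing_closure skew (n + r) (join_clique n E r) (T \<union> {n..<n+r}) = {..<n+r}"
proof -
  let ?D = "forcing_closure skew (n + r) (join_clique n E r) (T \<union> {n..<n+r})"
  have clique: "{n..<n+r} \<subseteq> ?D" by (auto intro: forcing_closure.init)
  have "x \<in> ?D" if "x \<in> forcing_closure skew n E T" for x
    using that
  proof induction
    case (init v)
    then show ?case by (auto intro: forcing_closure.init)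
  next
    case (force u w)
    have nbrs_u: "nbrs (n + r) (join_clique n E r) u = nbrs n E u \<union> {n..<n+r}"
      using assms(1) force.hyps(1) by (rule nbrs_join_clique_low)
    show ?case
    proof (rule forcing_closure.force[of u])
      show "u < n + r" using force.hyps(1) by simp
      show "skew \<or> u \<in> ?D" using force.IH(1) by blast
      show "w \<in> nbrs (n + r) (join_clique n E r) u" using force.hyps(2) nbrs_u by blast
      show "\<forall>x\<in>nbrs (n + r) (join_clique n E r) u. x \<noteq> w \<longrightarrow> x \<in> ?D"
        using force.IH(2) clique nbrs_u by blast
    qed
  qed
  then have "{..<n} \<subseteq> ?D" using assms(2) by blast
  with clique have "{..<n+r} \<subseteq> ?D" by (auto simp: subset_eq not_less)
  then show ?thesis by (auto dest: forcing_closure_less)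
qed

lemma forcing_closure_join_clique_restrict:
  assumes sg: "simple_graph n E" and iso: "\<forall>v<n. nbrs n E v \<noteq> {}"
    and full: "forcing_closure skew (n + r) (join_clique n E r) (S \<union> {n..<n+r}) = {..<n+r}"
  shows "forcing_closure skew n E (S \<inter> {..<n}) = {..<n}"
proof -
  let ?C = "forcing_closure skew n E (S \<inter> {..<n})"
  have "x < n \<longrightarrow> x \<in> ?C"
    if "x \<in> forcing_closure skew (n + r) (join_clique n E r) (S \<union> {n..<n+r})" for x
    using that
  proof induction
    case (init v)
    then show ?case by (auto intro: forcing_closure.init)
  next
    case (force u w)
    show ?case
    proof
      assume "w < n"
      consider (low) "u < n" | (high) "n \<le> u" by linarith
      then show "w \<in> ?C"
      proof cases
        case low
        have nbrs_u: "nbrs (n + r) (join_clique n E r) u = nbrs n E u \<union> {n..<n+r}"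
          using sg low by (rule nbrs_join_clique_low)
        show ?thesis
        proof (rule forcing_closure.force[of u])
          show "u < n" by (rule low)
          show "skew \<or> u \<in> ?C" using force.IH(1) low by blast
          show "w \<in> nbrs n E u" using force.hyps(2) nbrs_u \<open>w < n\<close> by auto
          show "\<forall>x\<in>nbrs n E u. x \<noteq> w \<longrightarrow> x \<in> ?C"
            using force.IH(2) nbrs_u nbrs_less by blast
        qed
      next
        case high
        have "{..<n} - {w} \<subseteq> ?C"
          using force.IH(2) nbrs_join_clique_high[OF high force.hyps(1)] high by auto
        then have "forcing_closure skew n E ({..<n} - {w}) \<subseteq> ?C"
          by (rule forcing_closure_subset_closure)
        moreover obtain y where "y \<in> nbrs n E w" using iso \<open>w < n\<close> by blast
        then have "w \<in> nbrs n E y" by (rule simple_graph_nbrs_sym[OF sg])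
        ultimately show ?thesis using forcing_closure_all_but_one[OF sg] \<open>w < n\<close> by blast
      qed
    qed
  qed
  with full show ?thesis by (auto dest: forcing_closure_less)
qed

lemma card_join_clique_forcing_set_clique_vertex:
  assumes "S \<subseteq> {..<n+r}" and "n \<le> u" and "u < n + r" and "skew \<or> u \<in> S"
    and "nbrs (n + r) (join_clique n E r) u - {w} \<subseteq> S"
  shows "n + r \<le> card S + (if skew then 2 else 1)"
proof -
  have "{..<n+r} - S \<subseteq> (if skew then {u, w} else {w})"
    using assms(4,5) nbrs_join_clique_high[OF assms(2,3)] by auto
  then have "card ({..<n+r} - S) \<le> card (if skew then {u, w} else {w})"
    by (intro card_mono) auto
  also have "\<dots> \<le> (if skew then 2 else 1)" by (simp add: card_insert_if)
  finally show ?thesis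
    using assms(1) finite_subset[OF assms(1)] by (simp add: card_Diff_subset)
qed

lemma join_clique_forcing_set_graph_vertex_forces_clique_vertex:
  assumes sg: "simple_graph n E" and iso: "\<forall>v<n. nbrs n E v \<noteq> {}"
    and S: "S \<subseteq> {..<n+r}"
    and full: "forcing_closure skew (n + r) (join_clique n E r) S = {..<n+r}"
    and u: "u < n" "skew \<or> u \<in> S" and w: "n \<le> w" "w < n + r" "w \<notin> S"
    and others: "nbrs (n + r) (join_clique n E r) u - {w} \<subseteq> S"
  shows "\<exists>T \<subseteq> {..<n}. forcing_closure skew n E T = {..<n} \<and> card T + r \<le> card S"
proof -
  define SG where "SG = S \<inter> {..<n}"
  have SG: "SG \<subseteq> {..<n}" unfolding SG_def by blast
  have nbrs_u: "nbrs (n + r) (join_clique n E r) u = nbrs n E u \<union> {n..<n+r}"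
    using sg u(1) by (rule nbrs_join_clique_low)
  have "{..<n+r} \<subseteq> forcing_closure skew (n + r) (join_clique n E r) (S \<union> {n..<n+r})"
    using full forcing_closure_mono[of S "S \<union> {n..<n+r}" skew "n + r" "join_clique n E r"]
    by blast
  then have "forcing_closure skew (n + r) (join_clique n E r) (S \<union> {n..<n+r}) = {..<n+r}"
    by (auto dest: forcing_closure_less)
  then have SG_full: "forcing_closure skew n E SG = {..<n}"
    unfolding SG_def by (rule forcing_closure_join_clique_restrict[OF sg iso])
  obtain x where x: "x \<in> nbrs n E u" using iso u(1) by blast
  have nbrs_SG: "nbrs n E u \<subseteq> SG"
    using others nbrs_u w(1) nbrs_less unfolding SG_def by fastforce
  moreover have "skew \<or> u \<in> SG - {x}"
    using u x simple_graph_nbrs_irrefl[OF sg, of u] unfolding SG_def by auto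
  ultimately have "forcing_closure skew n E (SG - {x}) = {..<n}"
    using SG_full SG x u(1) by (intro forcing_closure_delete_forced[of _ _ _ _ u])
  moreover have "card (SG - {x}) + r \<le> card S"
  proof -
    have "x \<in> SG" using x nbrs_SG by blast
    then have "Suc (card (SG - {x})) = card SG"
      by (rule card_Suc_Diff1[OF finite_subset[OF SG finite_lessThan]])
    moreover have "S - {..<n} = {n..<n+r} - {w}" using others nbrs_u w S by auto
    then have "Suc (card (S - {..<n})) = r" using w by simp
    moreover have "card S = card SG + card (S - {..<n})"
      unfolding SG_def using card_Int_Diff[OF finite_subset[OF S finite_lessThan]] .
    ultimately show ?thesis by linarith
  qed
  ultimately show ?thesis using SG by (intro exI[of _ "SG - {x}"]) auto
qed

lemma forcing_set_from_join_clique: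
  assumes sg: "simple_graph n E" and "0 < n" and iso: "\<forall>v<n. nbrs n E v \<noteq> {}"
    and S: "S \<subseteq> {..<n+r}"
    and full: "forcing_closure skew (n + r) (join_clique n E r) S = {..<n+r}"
  shows "\<exists>T \<subseteq> {..<n}. forcing_closure skew n E T = {..<n} \<and> card T + r \<le> card S"
proof (cases "S = {..<n+r}")
  case True
  then show ?thesis using forcing_closure_lessThan by (intro exI[of _ "{..<n}"]) auto
next
  case False
  then obtain a where "a \<in> forcing_closure skew (n + r) (join_clique n E r) S" "a \<notin> S"
    using S full by blast
  then obtain u w where u: "u < n + r" "skew \<or> u \<in> S"
    and w: "w \<in> nbrs (n + r) (join_clique n E r) u - S"
    and others: "nbrs (n + r) (join_clique n E r) u - {w} \<subseteq> S"
    by (blast dest: forcing_closure_first_force)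
  have "w < n + r" using w nbrs_less by blast
  consider (clique) "n \<le> u" | (graph) "u < n" "w < n" | (mixed) "u < n" "n \<le> w" by linarith
  then show ?thesis
  proof cases
    case clique
    obtain T where "T \<subseteq> {..<n}" "forcing_closure skew n E T = {..<n}"
      "card T + (if skew then 2 else 1) \<le> n"
      using exists_forcing_set_card_le[OF sg \<open>0 < n\<close> iso] by blast
    moreover have "n + r \<le> card S + (if skew then 2 else 1)"
      using S clique u others by (rule card_join_clique_forcing_set_clique_vertex)
    ultimately show ?thesis by (intro exI[of _ T]) auto
  next
    case graph
    have "{n..<n+r} \<subseteq> S" using others nbrs_join_clique_low[OF sg graph(1)] graph(2) by auto
    then have "forcing_closure skew n E (S \<inter> {..<n}) = {..<n}"
      using forcing_closure_join_clique_restrict[OF sg iso, of skew r S] full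
      by (simp add: Un_absorb2)
    moreover have "S - {..<n} = {n..<n+r}" using \<open>{n..<n+r} \<subseteq> S\<close> S by auto
    then have "card S = card (S \<inter> {..<n}) + r"
      using card_Int_Diff[OF finite_subset[OF S finite_lessThan], of "{..<n}"] by simp
    ultimately show ?thesis by (intro exI[of _ "S \<inter> {..<n}"]) auto
  next
    case mixed
    then show ?thesis
      using join_clique_forcing_set_graph_vertex_forces_clique_vertex[OF sg iso S full] u w others
        \<open>w < n + r\<close> by blast
  qed
qed

lemma forcing_number_join_clique:
  assumes "simple_graph n E" and "0 < n" and "\<forall>v<n. nbrs n E v \<noteq> {}"
  shows "forcing_number skew (n + r) (join_clique n E r) = forcing_number skew n E + r"
proof (rule antisym)
  obtain T where T: "T \<subseteq> {..<n}" "card T = forcing_number skew n E"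
    "forcing_closure skew n E T = {..<n}"
    using forcing_number_attained by blast
  have "forcing_number skew (n + r) (join_clique n E r) \<le> card (T \<union> {n..<n+r})"
    using T(1) forcing_closure_join_clique_extend[OF assms(1) T(3)]
    by (intro forcing_number_le) auto
  also have "card (T \<union> {n..<n+r}) = card T + r"
    using T(1) finite_subset[OF T(1)] by (subst card_Un_disjoint) auto
  finally show "forcing_number skew (n + r) (join_clique n E r) \<le> forcing_number skew n E + r"
    using T(2) by simp
next
  obtain S where S: "S \<subseteq> {..<n+r}" "card S = forcing_number skew (n + r) (join_clique n E r)"
    "forcing_closure skew (n + r) (join_clique n E r) S = {..<n+r}"
    using forcing_number_attained by blast
  obtain T where "T \<subseteq> {..<n}" "forcing_closure skew n E T = {..<n}" "card T + r \<le> card S"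
    using forcing_set_from_join_clique[OF assms S(1) S(3)] by blast
  then show "forcing_number skew n E + r \<le> forcing_number skew (n + r) (join_clique n E r)"
    using forcing_number_le[of T n skew E] S(2) by simp
qed

theorem proposition4p4:
  fixes n1 n2 :: nat and E1 E2 :: "nat \<Rightarrow> nat \<Rightarrow> bool"
  assumes "simple_graph n1 E1" and "simple_graph n2 E2"
    and "connected_graph n1 E1" and "connected_graph n2 E2"
    and "laplacian_cospectral n1 E1 n2 E2"
  shows "(zero_forcing_number n1 E1 \<noteq> zero_forcing_number n2 E2 \<longrightarrow>
            (\<forall>r::nat. r \<ge> 1 \<longrightarrow>
               laplacian_cospectral (n1 + r) (join_adj n1 E1 r (complete_graph_adj r))
                                    (n2 + r) (join_adj n2 E2 r (complete_graph_adj r)) \<and>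
               zero_forcing_number (n1 + r) (join_adj n1 E1 r (complete_graph_adj r)) \<noteq>
               zero_forcing_number (n2 + r) (join_adj n2 E2 r (complete_graph_adj r)))) \<and>
         (skew_zero_forcing_number n1 E1 \<noteq> skew_zero_forcing_number n2 E2 \<longrightarrow>
            (\<forall>r::nat. r \<ge> 1 \<longrightarrow>
               laplacian_cospectral (n1 + r) (join_adj n1 E1 r (complete_graph_adj r))
                                    (n2 + r) (join_adj n2 E2 r (complete_graph_adj r)) \<and>
               skew_zero_forcing_number (n1 + r) (join_adj n1 E1 r (complete_graph_adj r)) \<noteq>
               skew_zero_forcing_number (n2 + r) (join_adj n2 E2 r (complete_graph_adj r))))"
proof -
  have n: "n1 = n2" using assms(5) by (rule laplacian_cospectral_card_eq)
  have cospectral: "laplacian_cospectral (n1 + r) (join_clique n1 E1 r) (n2 + r) (join_clique n2 E2 r)"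
    for r using assms(1,2,5) by (rule laplacian_cospectral_join_clique)
  have "0 < n1" using assms(3) unfolding connected_graph_def by simp
  then consider "n1 = 1" | "2 \<le> n1" by linarith
  then show ?thesis
  proof cases
    case 1
    then have "E1 = E2" using assms(1,2) n simple_graph_one_vertex by metis
    then show ?thesis using n by simp
  next
    case 2
    have "\<forall>v<n1. nbrs n1 E1 v \<noteq> {}" "\<forall>v<n2. nbrs n2 E2 v \<noteq> {}"
      using connected_graph_nbrs_nonempty assms(1-4) 2 n by auto
    then show ?thesis
      unfolding zero_forcing_number_eq_forcing_number skew_zero_forcing_number_eq_forcing_number
      using forcing_number_join_clique[OF assms(1) \<open>0 < n1\<close>]
        forcing_number_join_clique[OF assms(2)] \<open>0 < n1\<close> n cospectral
      by simp
  qed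
qed

end
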